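(* Suppose $T\in L_{aut}(\mathcal B)$ has the shadowing property. Then the following are equivalent: (1) $T$ is uniformly expansive; (2) $T$ is expansive; (3) $T$ has the unique shadowing property; (4) $T$ is hyperbolic.
   Context: $\mathcal B$ is a Banach space, $S_{\mathcal B}$ its unit sphere. A sequence $(x_n)_{n\in\mathbb Z}$ is a $\delta$-pseudo-orbit if $|x_{n+1}-Tx_n|<\delta$ for all $n$; $y$ $\varepsilon$-shadows it if $|x_n-T^ny|<\varepsilon$ for all $n$. Shadowing property: for every $\varepsilon>0$ there is $\delta>0$ such that every $\delta$-pseudo-orbit is $\varepsilon$-shadowed by some point. Unique shadowing property: there exist $\varepsilon_0,\delta_0>0$ such that for every $0<\varepsilon\le\varepsilon_0$ there is $0<\delta\le\delta_0$ such that every $\delta$-pseudo-orbit is $\varepsilon$-shadowed by exactly one point. $T$ is expansive if there is $c>0$ such that $|T^nx-T^ny|\le c$ for all $n\in\mathbb Z$ implies $x=y$. $T$ is uniformly expansive if there is $n>0$ such that for every $x\in S_{\mathcal B}$ either $|T^nx|\ge2$ or $|T^{-n}x|\ge2$. $T$ is hyperbolic if its spectrum does not meet the unit circle. *)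

theory Defs
  imports "HOL-Analysis.Analysis"
begin

definition L_aut :: "('a::banach \<Rightarrow> 'a) set" where
  "L_aut = {T. bounded_linear T \<and> bij T}"

definition iter_int :: "('a \<Rightarrow> 'a) \<Rightarrow> int \<Rightarrow> 'a \<Rightarrow> 'a" where
  "iter_int T n = (if 0 \<le> n then T ^^ nat n else (inv T) ^^ nat (- n))"

definition pseudo_orbit :: "('a::real_normed_vector \<Rightarrow> 'a) \<Rightarrow> real \<Rightarrow> (int \<Rightarrow> 'a) \<Rightarrow> bool" where
  "pseudo_orbit T \<delta> xs \<longleftrightarrow> (\<forall>n. norm (xs (n + 1) - T (xs n)) < \<delta>)"

definition shadows :: "('a::real_normed_vector \<Rightarrow> 'a) \<Rightarrow> real \<Rightarrow> 'a \<Rightarrow> (int \<Rightarrow> 'a) \<Rightarrow> bool" where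
  "shadows T \<epsilon> y xs \<longleftrightarrow> (\<forall>n. norm (xs n - iter_int T n y) < \<epsilon>)"

definition shadowing_property :: "('a::real_normed_vector \<Rightarrow> 'a) \<Rightarrow> bool" where
  "shadowing_property T \<longleftrightarrow>
     (\<forall>\<epsilon>>0. \<exists>\<delta>>0. \<forall>xs. pseudo_orbit T \<delta> xs \<longrightarrow> (\<exists>y. shadows T \<epsilon> y xs))"

definition unique_shadowing_property :: "('a::real_normed_vector \<Rightarrow> 'a) \<Rightarrow> bool" where
  "unique_shadowing_property T \<longleftrightarrow>
     (\<exists>\<epsilon>0>0. \<exists>\<delta>0>0. \<forall>\<epsilon>. 0 < \<epsilon> \<and> \<epsilon> \<le> \<epsilon>0 \<longrightarrow>
        (\<exists>\<delta>. 0 < \<delta> \<and> \<delta> \<le> \<delta>0 \<and>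
           (\<forall>xs. pseudo_orbit T \<delta> xs \<longrightarrow> (\<exists>!y. shadows T \<epsilon> y xs))))"

definition expansive :: "('a::real_normed_vector \<Rightarrow> 'a) \<Rightarrow> bool" where
  "expansive T \<longleftrightarrow>
     (\<exists>c>0. \<forall>x y. (\<forall>n. norm (iter_int T n x - iter_int T n y) \<le> c) \<longrightarrow> x = y)"

definition uniformly_expansive :: "('a::real_normed_vector \<Rightarrow> 'a) \<Rightarrow> bool" where
  "uniformly_expansive T \<longleftrightarrow>
     (\<exists>n::nat. n > 0 \<and> (\<forall>x. norm x = 1 \<longrightarrow>
        norm (iter_int T (int n) x) \<ge> 2 \<or> norm (iter_int T (- int n) x) \<ge> 2))"

text \<open>Complexification: the operator \<open>T_C - \<lambda> I\<close> on \<open>'a \<times> 'a\<close> (pairs \<open>x + i y\<close>),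
  for \<open>\<lambda> = a + i b\<close>.\<close>
definition complexified_shift :: "('a::real_normed_vector \<Rightarrow> 'a) \<Rightarrow> complex \<Rightarrow> 'a \<times> 'a \<Rightarrow> 'a \<times> 'a" where
  "complexified_shift T z = (\<lambda>(x, y).
     (T x - (Re z *\<^sub>R x - Im z *\<^sub>R y), T y - (Im z *\<^sub>R x + Re z *\<^sub>R y)))"

definition spectrum :: "('a::real_normed_vector \<Rightarrow> 'a) \<Rightarrow> complex set" where
  "spectrum T = {z. \<not> (\<exists>S. bounded_linear S \<and> S \<circ> complexified_shift T z = id
                                 \<and> complexified_shift T z \<circ> S = id)}"

definition hyperbolic :: "('a::real_normed_vector \<Rightarrow> 'a) \<Rightarrow> bool" where
  "hyperbolic T \<longleftrightarrow> spectrum T \<inter> {z. cmod z = 1} = {}"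

end

theory Submission
  imports Defs
begin

text \<open>
  For a linear automorphism, expansivity says that no nonzero point has a bounded two-sided orbit,
  and in the presence of shadowing so does unique shadowing. Uniform expansivity makes the norms
  along every nonzero orbit double every \<open>n\<close> steps. Conversely, shadowing without bounded orbits
  yields an a priori estimate \<open>sup \<parallel>u\<^sub>k\<parallel> \<le> C sup \<parallel>u\<^sub>k\<^sub>+\<^sub>1 - T u\<^sub>k\<parallel>\<close> for bounded
  sequences: applied to a truncated and to a tent-weighted orbit it gives uniform expansivity, and
  applied to complexified sequences rotating by \<open>z\<close>, \<open>\<bar>z\<bar> = 1\<close>, it shows that \<open>T\<^sub>\<complex> - z\<close> has a
  bounded inverse. Finally, if \<open>T\<close> is hyperbolic then \<open>(T\<^sub>\<complex> - \<omega>)\<inverse>\<close> is uniformly bounded near the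
  unit circle. For a bounded orbit of \<open>x\<close>, the truncated resolvent series just outside and just
  inside the circle then nearly agree, and averaging them over the \<open>N\<close>-th roots of unity recovers
  \<open>x\<close> up to an error that vanishes as \<open>N \<rightarrow> \<infinity>\<close> and the distance to the circle tends to \<open>0\<close>.
\<close>

section \<open>Integer iterates of a linear automorphism\<close>

locale linear_automorphism =
  fixes T :: "'a::real_normed_vector \<Rightarrow> 'a"
  assumes linear: "linear T" and bij: "bij T"
begin

lemma T_inv_T [simp]: "T (inv T x) = x"
  using bij by (simp add: bij_is_surj surj_f_inv_f)

lemma inv_T_T [simp]: "inv T (T x) = x"
  using bij by (simp add: bij_is_inj)

lemma linear_inv: "linear (inv T)"
proof (rule linearI)
  fix x y
  have "inv T (x + y) = inv T (T (inv T x + inv T y))"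
    by (simp add: linear_add[OF linear])
  then show "inv T (x + y) = inv T x + inv T y" by simp
next
  fix r x
  have "inv T (r *\<^sub>R x) = inv T (T (r *\<^sub>R inv T x))"
    by (simp add: linear_scale[OF linear])
  then show "inv T (r *\<^sub>R x) = r *\<^sub>R inv T x" by simp
qed

lemma iter_int_0 [simp]: "iter_int T 0 x = x"
  by (simp add: iter_int_def)

lemma iter_int_succ: "iter_int T (k + 1) x = T (iter_int T k x)"
proof -
  consider "0 \<le> k" | "k = -1" | "k < -1" by linarith
  then show ?thesis
  proof cases
    case 1
    then have "nat (k + 1) = Suc (nat k)" by simp
    with 1 show ?thesis by (simp add: iter_int_def)
  next
    case 3
    then have "nat (- k) = Suc (nat (- (k + 1)))" by simp
    with 3 show ?thesis by (simp add: iter_int_def)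
  qed (simp add: iter_int_def)
qed

lemma iter_int_pred: "iter_int T (k - 1) x = inv T (iter_int T k x)"
  using iter_int_succ[of "k - 1" x] by simp

lemma iter_int_add: "iter_int T (a + b) x = iter_int T a (iter_int T b x)"
proof (induction a rule: int_induct[where k = 0])
  case (step1 i)
  have "iter_int T (i + 1 + b) x = T (iter_int T (i + b) x)"
    using iter_int_succ[of "i + b" x] by (simp add: add_ac)
  with step1 show ?case by (simp add: iter_int_succ)
next
  case (step2 i)
  have "iter_int T (i - 1 + b) x = inv T (iter_int T (i + b) x)"
    using iter_int_pred[of "i + b" x] by (simp add: algebra_simps)
  with step2 show ?case by (simp add: iter_int_pred)
qed simp

lemma linear_iter_int: "linear (iter_int T k)"
proof (induction k rule: int_induct[where k = 0])
  case base
  then show ?case by (simp add: iter_int_def linear_ident)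
next
  case (step1 i)
  have "iter_int T (i + 1) = T \<circ> iter_int T i" by (auto simp: iter_int_succ)
  show ?case unfolding \<open>iter_int T (i + 1) = T \<circ> iter_int T i\<close>
    by (rule linear_compose[OF step1.IH linear])
next
  case (step2 i)
  have "iter_int T (i - 1) = inv T \<circ> iter_int T i" by (auto simp: iter_int_pred)
  show ?case unfolding \<open>iter_int T (i - 1) = inv T \<circ> iter_int T i\<close>
    by (rule linear_compose[OF step2.IH linear_inv])
qed

lemma iter_int_diff: "iter_int T k (x - y) = iter_int T k x - iter_int T k y"
  using linear_diff[OF linear_iter_int] .

lemma iter_int_scaleR: "iter_int T k (r *\<^sub>R x) = r *\<^sub>R iter_int T k x"
  using linear_scale[OF linear_iter_int] .

lemma iter_int_zero [simp]: "iter_int T k 0 = 0"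
  using linear_0[OF linear_iter_int] .

lemma orbit_eq_iter_int:
  fixes u :: "int \<Rightarrow> 'a"
  assumes "\<And>k. u (k + 1) = T (u k)"
  shows "u k = iter_int T k (u 0)"
proof (induction k rule: int_induct[where k = 0])
  case (step1 i)
  then show ?case by (simp add: assms iter_int_succ)
next
  case (step2 i)
  have "u (i - 1) = inv T (u i)" using assms[of "i - 1"] by simp
  with step2 show ?case by (simp add: iter_int_pred)
qed simp

end

section \<open>Bounded orbits and expansivity\<close>

definition no_bounded_orbits :: "('a::real_normed_vector \<Rightarrow> 'a) \<Rightarrow> bool" where
  "no_bounded_orbits T \<longleftrightarrow> (\<forall>x. bounded (range (\<lambda>n. iter_int T n x)) \<longrightarrow> x = 0)"

lemma expansive_shadowing_imp_unique_shadowing: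
  fixes T :: "'a::real_normed_vector \<Rightarrow> 'a"
  assumes "expansive T" and "shadowing_property T"
  shows "unique_shadowing_property T"
proof -
  obtain c where "c > 0"
    and c: "\<And>x y. (\<forall>n. norm (iter_int T n x - iter_int T n y) \<le> c) \<Longrightarrow> x = y"
    using assms(1) unfolding expansive_def by blast
  have "\<exists>\<delta>. 0 < \<delta> \<and> \<delta> \<le> 1 \<and> (\<forall>xs. pseudo_orbit T \<delta> xs \<longrightarrow> (\<exists>!y. shadows T \<epsilon> y xs))"
    if \<epsilon>: "0 < \<epsilon> \<and> \<epsilon> \<le> c / 2" for \<epsilon>
  proof -
    obtain \<delta> where "\<delta> > 0" and \<delta>: "\<And>xs. pseudo_orbit T \<delta> xs \<Longrightarrow> \<exists>y. shadows T \<epsilon> y xs"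
      using assms(2) \<epsilon> unfolding shadowing_property_def by blast
    have "\<exists>!y. shadows T \<epsilon> y xs" if "pseudo_orbit T (min \<delta> 1) xs" for xs
    proof -
      have "pseudo_orbit T \<delta> xs"
        using that by (simp add: pseudo_orbit_def)
      then have "\<exists>y. shadows T \<epsilon> y xs" by (rule \<delta>)
      moreover have "y = y'" if "shadows T \<epsilon> y xs" "shadows T \<epsilon> y' xs" for y y'
      proof (rule c, rule allI)
        fix n
        have "norm (iter_int T n y - iter_int T n y')
              \<le> norm (xs n - iter_int T n y) + norm (xs n - iter_int T n y')"
          using norm_triangle_ineq4[of "xs n - iter_int T n y'" "xs n - iter_int T n y"]
          by (simp add: norm_minus_commute)
        also have "\<dots> < \<epsilon> + \<epsilon>"
          using that by (intro add_strict_mono) (auto simp: shadows_def)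
        finally show "norm (iter_int T n y - iter_int T n y') \<le> c"
          using \<epsilon> by simp
      qed
      ultimately show ?thesis by blast
    qed
    then show ?thesis using \<open>\<delta> > 0\<close> by (intro exI[of _ "min \<delta> 1"]) simp
  qed
  then show ?thesis unfolding unique_shadowing_property_def
    using \<open>c > 0\<close> by (intro exI[of _ "c / 2"] conjI exI[of _ "1::real"]) simp_all
qed

context linear_automorphism
begin

lemma no_bounded_orbitsD:
  fixes u :: "int \<Rightarrow> 'a"
  assumes "no_bounded_orbits T" and "bounded (range u)" and "\<And>k. u (k + 1) = T (u k)"
  shows "u k = 0"
proof -
  have orbit: "u n = iter_int T n (u 0)" for n
    using orbit_eq_iter_int[of u, OF assms(3)] .
  then have eq: "(\<lambda>n. iter_int T n (u 0)) = u" by (intro ext) (rule sym)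
  have "bounded (range (\<lambda>n. iter_int T n (u 0)))" unfolding eq by (rule assms(2))
  then have "u 0 = 0" using assms(1) by (simp add: no_bounded_orbits_def)
  then show ?thesis using orbit[of k] by simp
qed

lemma expansive_iff_no_bounded_orbits: "expansive T \<longleftrightarrow> no_bounded_orbits T"
proof
  assume "expansive T"
  then obtain c where "c > 0"
    and c: "\<And>x y. (\<forall>n. norm (iter_int T n x - iter_int T n y) \<le> c) \<Longrightarrow> x = y"
    by (auto simp: expansive_def)
  show "no_bounded_orbits T" unfolding no_bounded_orbits_def
  proof (intro allI impI)
    fix z assume "bounded (range (\<lambda>n. iter_int T n z))"
    then obtain B where "B > 0" and B: "\<And>n. norm (iter_int T n z) \<le> B"
      by (auto simp: bounded_pos)
    have "norm (iter_int T n ((c / B) *\<^sub>R z) - iter_int T n 0) \<le> c" for n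
      using mult_left_mono[OF B, of "c / B"] \<open>c > 0\<close> \<open>B > 0\<close> by (simp add: iter_int_scaleR)
    then have "(c / B) *\<^sub>R z = 0" using c by blast
    then show "z = 0" using \<open>c > 0\<close> \<open>B > 0\<close> by simp
  qed
next
  assume nbo: "no_bounded_orbits T"
  show "expansive T" unfolding expansive_def
  proof (intro exI[of _ 1] conjI allI impI)
    fix x y assume "\<forall>n. norm (iter_int T n x - iter_int T n y) \<le> 1"
    then have "bounded (range (\<lambda>n. iter_int T n (x - y)))"
      by (auto simp: bounded_iff iter_int_diff)
    with nbo have "x - y = 0" unfolding no_bounded_orbits_def by blast
    then show "x = y" by simp
  qed simp
qed

lemma unique_shadowing_imp_expansive:
  assumes "unique_shadowing_property T"
  shows "expansive T"
proof -
  obtain \<epsilon> \<delta>\<^sub>0 where "\<epsilon> > 0" and unique_shadowing: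
    "\<forall>\<epsilon>'. 0 < \<epsilon>' \<and> \<epsilon>' \<le> \<epsilon> \<longrightarrow>
       (\<exists>\<delta>. 0 < \<delta> \<and> \<delta> \<le> \<delta>\<^sub>0 \<and> (\<forall>xs. pseudo_orbit T \<delta> xs \<longrightarrow> (\<exists>!y. shadows T \<epsilon>' y xs)))"
    using assms unfolding unique_shadowing_property_def by blast
  then obtain \<delta> where "\<delta> > 0" and unique: "\<And>xs. pseudo_orbit T \<delta> xs \<Longrightarrow> \<exists>!y. shadows T \<epsilon> y xs"
    by auto
  have "pseudo_orbit T \<delta> (\<lambda>_. 0)"
    using \<open>\<delta> > 0\<close> by (simp add: pseudo_orbit_def linear_0[OF linear])
  moreover have "shadows T \<epsilon> 0 (\<lambda>_. 0)"
    using \<open>\<epsilon> > 0\<close> by (simp add: shadows_def)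
  ultimately have zero_only: "y = 0" if "shadows T \<epsilon> y (\<lambda>_. 0)" for y
    using unique that by blast
  show ?thesis unfolding expansive_def
  proof (intro exI[of _ "\<epsilon> / 2"] conjI allI impI)
    fix x y assume close: "\<forall>n. norm (iter_int T n x - iter_int T n y) \<le> \<epsilon> / 2"
    have "norm (0 - iter_int T n (x - y)) < \<epsilon>" for n
      using close[rule_format, of n] \<open>\<epsilon> > 0\<close> by (simp add: iter_int_diff norm_minus_commute)
    then have "shadows T \<epsilon> (x - y) (\<lambda>_. 0)" by (simp add: shadows_def)
    then have "x - y = 0" by (rule zero_only)
    then show "x = y" by simp
  qed (use \<open>\<epsilon> > 0\<close> in simp)
qed

lemma doubling_along_orbit:
  assumes dichotomy: "\<And>v. 2 * norm v \<le> norm (iter_int T s v) \<or> 2 * norm v \<le> norm (iter_int T (- s) v)"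
    and start: "2 * norm y \<le> norm (iter_int T s y)"
  shows "2 ^ m * norm y \<le> norm (iter_int T (int m * s) y)"
proof -
  define a where "a m = iter_int T (int m * s) y" for m
  have backward: "iter_int T (- s) (a (Suc m)) = a m" and forward: "iter_int T s (a (Suc m)) = a (Suc (Suc m))" for m
    by (simp_all add: a_def iter_int_add[symmetric] algebra_simps)
  have doubling: "2 * norm (a m) \<le> norm (a (Suc m))" for m
  proof (induction m)
    case 0
    then show ?case using start by (simp add: a_def)
  next
    case (Suc m)
    show ?case
    proof (cases "2 * norm (a (Suc m)) \<le> norm (a m)")
      case True
      with Suc.IH have "norm (a (Suc m)) \<le> 0" by linarith
      then show ?thesis by simp
    next
      case False
      then show ?thesis using dichotomy[of "a (Suc m)"] backward forward by simp
    qed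
  qed
  show ?thesis
  proof (induction m)
    case (Suc m)
    then show ?case using doubling[of m] by (simp add: a_def)
  qed (simp add: a_def)
qed

lemma uniformly_expansive_imp_no_bounded_orbits:
  assumes "uniformly_expansive T"
  shows "no_bounded_orbits T"
proof -
  obtain n :: nat where unit:
    "\<And>x. norm x = 1 \<Longrightarrow> 2 \<le> norm (iter_int T (int n) x) \<or> 2 \<le> norm (iter_int T (- int n) x)"
    using assms by (auto simp: uniformly_expansive_def)
  have dichotomy: "2 * norm v \<le> norm (iter_int T (int n) v) \<or> 2 * norm v \<le> norm (iter_int T (- int n) v)" for v
  proof (cases "v = 0")
    case False
    then have "norm ((1 / norm v) *\<^sub>R v) = 1" by simp
    from unit[OF this] show ?thesis
      using False by (simp add: iter_int_scaleR field_simps)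
  qed simp
  show ?thesis unfolding no_bounded_orbits_def
  proof (intro allI impI)
    fix y assume "bounded (range (\<lambda>k. iter_int T k y))"
    then obtain B where B: "\<And>k. norm (iter_int T k y) \<le> B" by (auto simp: bounded_iff)
    show "y = 0"
    proof (rule ccontr)
      assume "y \<noteq> 0"
      obtain s where "s = int n \<or> s = - int n" and start: "2 * norm y \<le> norm (iter_int T s y)"
        using dichotomy[of y] by auto
      then have "2 * norm v \<le> norm (iter_int T s v) \<or> 2 * norm v \<le> norm (iter_int T (- s) v)" for v
        using dichotomy[of v] by auto
      from doubling_along_orbit[OF this start] B
      have "2 ^ m * norm y \<le> B" for m by (meson order_trans)
      moreover obtain m where "B / norm y < 2 ^ m" using real_arch_pow[of 2] by auto
      ultimately show False using \<open>y \<noteq> 0\<close> by (simp add: field_simps) (meson not_le)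
    qed
  qed
qed

end

section \<open>Consequences of shadowing\<close>

fun forward_driven :: "('a::ab_group_add \<Rightarrow> 'a) \<Rightarrow> (int \<Rightarrow> 'a) \<Rightarrow> nat \<Rightarrow> 'a" where
  "forward_driven T w 0 = 0"
| "forward_driven T w (Suc n) = T (forward_driven T w n) + w (int n)"

fun backward_driven :: "('a::ab_group_add \<Rightarrow> 'a) \<Rightarrow> (int \<Rightarrow> 'a) \<Rightarrow> nat \<Rightarrow> 'a" where
  "backward_driven T w 0 = 0"
| "backward_driven T w (Suc n) = inv T (backward_driven T w n - w (- int (Suc n)))"

definition driven_orbit :: "('a::ab_group_add \<Rightarrow> 'a) \<Rightarrow> (int \<Rightarrow> 'a) \<Rightarrow> int \<Rightarrow> 'a" where
  "driven_orbit T w k =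
     (if 0 \<le> k then forward_driven T w (nat k) else backward_driven T w (nat (- k)))"

definition difference_bounded_below :: "('a::real_normed_vector \<Rightarrow> 'a) \<Rightarrow> real \<Rightarrow> bool" where
  "difference_bounded_below T C \<longleftrightarrow>
     (\<forall>(u :: int \<Rightarrow> 'a) \<eta>. bounded (range u) \<and> (\<forall>k. norm (u (k + 1) - T (u k)) \<le> \<eta>)
        \<longrightarrow> (\<forall>k. norm (u k) \<le> C * \<eta>))"

lemma difference_bounded_belowD:
  fixes u :: "int \<Rightarrow> 'a::real_normed_vector"
  assumes "difference_bounded_below T C" "bounded (range u)" "\<And>k. norm (u (k + 1) - T (u k)) \<le> \<eta>"
  shows "norm (u k) \<le> C * \<eta>"
proof -
  have "\<forall>k. norm (u (k + 1) - T (u k)) \<le> \<eta>" using assms(3) by blast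
  with assms(1,2) show ?thesis unfolding difference_bounded_below_def by blast
qed

lemma norm_fst_le_norm: "norm (fst p) \<le> norm p"
  by (cases p) (simp add: norm_fst_le)

lemma norm_snd_le_norm: "norm (snd p) \<le> norm p"
  by (cases p) (simp add: norm_snd_le)

lemma difference_bounded_below_map_prod:
  assumes "difference_bounded_below T C"
  shows "difference_bounded_below (map_prod T T) (2 * C)"
  unfolding difference_bounded_below_def
proof (intro allI impI, elim conjE)
  fix X :: "int \<Rightarrow> 'a \<times> 'a" and \<eta> k
  assume bdd: "bounded (range X)" and jump: "\<forall>k. norm (X (k + 1) - map_prod T T (X k)) \<le> \<eta>"
  obtain B where B: "\<And>k. norm (X k) \<le> B" using bdd by (auto simp: bounded_iff)
  have "bounded (range (fst \<circ> X))" "bounded (range (snd \<circ> X))"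
    using order_trans[OF norm_fst_le_norm B] order_trans[OF norm_snd_le_norm B]
    by (auto simp: bounded_iff intro!: exI[of _ B])
  moreover have "norm (fst (X (k + 1)) - T (fst (X k))) \<le> \<eta>" "norm (snd (X (k + 1)) - T (snd (X k))) \<le> \<eta>" for k
    using order_trans[OF norm_fst_le_norm jump[rule_format, of k]]
      order_trans[OF norm_snd_le_norm jump[rule_format, of k]]
    by simp_all
  ultimately have "norm (fst (X k)) \<le> C * \<eta>" "norm (snd (X k)) \<le> C * \<eta>"
    using difference_bounded_belowD[OF assms, of "fst \<circ> X"] difference_bounded_belowD[OF assms, of "snd \<circ> X"]
    by simp_all
  then show "norm (X k) \<le> 2 * C * \<eta>"
    using norm_Pair_le[of "fst (X k)" "snd (X k)"] by simp
qed

lemma finite_support_imp_bounded: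
  fixes u :: "'b \<Rightarrow> 'a::real_normed_vector"
  assumes "finite {k. u k \<noteq> 0}"
  shows "bounded (range u)"
proof (rule bounded_subset)
  show "bounded (insert 0 (u ` {k. u k \<noteq> 0}))" using assms by auto
qed auto

lemma tent_lipschitz:
  fixes a b N :: real
  assumes "N > 0"
  shows "\<bar>max 0 (1 - \<bar>a\<bar> / N) - max 0 (1 - \<bar>b\<bar> / N)\<bar> \<le> \<bar>a - b\<bar> / N"
proof -
  have "\<bar>\<bar>a\<bar> / N - \<bar>b\<bar> / N\<bar> \<le> \<bar>a - b\<bar> / N"
    using assms by (simp add: diff_divide_distrib[symmetric] abs_triangle_ineq3 divide_right_mono)
  then show ?thesis by linarith
qed

context linear_automorphism
begin

lemma driven_orbit_step: "driven_orbit T w (k + 1) - T (driven_orbit T w k) = w k"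
proof (cases "0 \<le> k")
  case True
  then have "nat (k + 1) = Suc (nat k)" by simp
  with True show ?thesis by (simp add: driven_orbit_def)
next
  case False
  then have "driven_orbit T w (k + 1) = backward_driven T w (nat (- (k + 1)))"
    by (cases "k = -1") (auto simp: driven_orbit_def)
  moreover have "nat (- k) = Suc (nat (- (k + 1)))" using False by simp
  ultimately show ?thesis using False by (simp add: driven_orbit_def)
qed

lemma shadowing_bounded_solution:
  fixes w :: "int \<Rightarrow> 'a"
  assumes "shadowing_property T" and "bounded (range w)"
  shows "\<exists>u. bounded (range u) \<and> (\<forall>k. u (k + 1) - T (u k) = w k)"
proof -
  obtain d where "d > 0" and shadow: "\<And>xs. pseudo_orbit T d xs \<Longrightarrow> \<exists>y. shadows T 1 y xs"
    using assms(1) unfolding shadowing_property_def by (meson zero_less_one)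
  obtain W where "W > 0" and W: "\<And>k. norm (w k) \<le> W"
    using assms(2) by (auto simp: bounded_pos)
  define s where "s = d / (2 * W)"
  have "s > 0" using \<open>d > 0\<close> \<open>W > 0\<close> by (simp add: s_def)
  define x where "x = driven_orbit T (\<lambda>k. s *\<^sub>R w k)"
  have "norm (x (k + 1) - T (x k)) < d" for k
  proof -
    have "norm (x (k + 1) - T (x k)) = s * norm (w k)"
      using \<open>s > 0\<close> by (simp add: x_def driven_orbit_step)
    also have "\<dots> \<le> s * W" using W \<open>s > 0\<close> by (simp add: mult_left_mono)
    also have "\<dots> < d" using \<open>d > 0\<close> \<open>W > 0\<close> by (simp add: s_def)
    finally show ?thesis .
  qed
  then have "pseudo_orbit T d x" by (simp add: pseudo_orbit_def)
  then obtain y where y: "shadows T 1 y x" using shadow by blast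
  define u where "u k = (1 / s) *\<^sub>R (x k - iter_int T k y)" for k
  have "norm (u k) \<le> 1 / s" for k
    using y \<open>s > 0\<close> by (simp add: u_def shadows_def less_imp_le divide_right_mono)
  then have "bounded (range u)" by (auto simp: bounded_iff)
  moreover have "u (k + 1) - T (u k) = w k" for k
  proof -
    have "u (k + 1) - T (u k) = (1 / s) *\<^sub>R ((x (k + 1) - T (x k)) - (iter_int T (k + 1) y - T (iter_int T k y)))"
      by (simp add: u_def linear_scale[OF linear] linear_diff[OF linear] algebra_simps)
    then show ?thesis using \<open>s > 0\<close> by (simp add: x_def driven_orbit_step iter_int_succ)
  qed
  ultimately show ?thesis by blast
qed

text \<open>Rescaled to jumps below \<open>d\<close>, the sequence is shadowed by a point with bounded orbit, that is, by \<open>0\<close>.\<close>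

lemma shadowing_bounded_sequence_small:
  fixes u :: "int \<Rightarrow> 'a"
  assumes "no_bounded_orbits T" and "d > 0"
    and shadow: "\<And>xs. pseudo_orbit T d xs \<Longrightarrow> \<exists>y. shadows T 1 y xs"
    and bdd: "bounded (range u)" and jump: "\<And>k. norm (u (k + 1) - T (u k)) \<le> \<eta>" and "\<eta> > 0"
  shows "norm (u k) < 2 / d * \<eta>"
proof -
  define s where "s = d / (2 * \<eta>)"
  have "s > 0" using \<open>d > 0\<close> \<open>\<eta> > 0\<close> by (simp add: s_def)
  have "norm (s *\<^sub>R u (k + 1) - T (s *\<^sub>R u k)) < d" for k
  proof -
    have "norm (s *\<^sub>R u (k + 1) - T (s *\<^sub>R u k)) = s * norm (u (k + 1) - T (u k))"
      using \<open>s > 0\<close> by (simp add: linear_scale[OF linear] flip: scaleR_diff_right)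
    also have "\<dots> \<le> s * \<eta>" using jump \<open>s > 0\<close> by (simp add: mult_left_mono)
    also have "\<dots> < d" using \<open>d > 0\<close> \<open>\<eta> > 0\<close> by (simp add: s_def)
    finally show ?thesis .
  qed
  then have "pseudo_orbit T d (\<lambda>k. s *\<^sub>R u k)" by (simp add: pseudo_orbit_def)
  then obtain y where y: "shadows T 1 y (\<lambda>k. s *\<^sub>R u k)" using shadow by blast
  obtain B where B: "\<And>k. norm (u k) \<le> B" using bdd by (auto simp: bounded_iff)
  have "norm (iter_int T n y) \<le> s * B + 1" for n
  proof -
    have "norm (iter_int T n y) \<le> norm (s *\<^sub>R u n) + norm (s *\<^sub>R u n - iter_int T n y)"
      using norm_triangle_sub[of "iter_int T n y" "s *\<^sub>R u n"] by (simp add: norm_minus_commute)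
    moreover have "norm (s *\<^sub>R u n) \<le> s * B" using B[of n] \<open>s > 0\<close> by simp
    moreover have "norm (s *\<^sub>R u n - iter_int T n y) < 1" using y by (simp add: shadows_def)
    ultimately show ?thesis by linarith
  qed
  then have "y = 0" using assms(1) by (auto simp: no_bounded_orbits_def bounded_iff)
  then have "s * norm (u k) < 1" using y \<open>s > 0\<close> by (simp add: shadows_def)
  then show ?thesis using \<open>d > 0\<close> \<open>\<eta> > 0\<close> by (simp add: s_def field_simps)
qed

lemma shadowing_difference_bounded_below:
  assumes "no_bounded_orbits T" and "shadowing_property T"
  shows "\<exists>C\<ge>1. difference_bounded_below T C"
proof -
  obtain d where "d > 0" and shadow: "\<And>xs. pseudo_orbit T d xs \<Longrightarrow> \<exists>y. shadows T 1 y xs"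
    using assms(2) unfolding shadowing_property_def by (meson zero_less_one)
  have "norm (u k) \<le> max 1 (2 / d) * \<eta>"
    if bdd: "bounded (range u)" and jump: "\<forall>k. norm (u (k + 1) - T (u k)) \<le> \<eta>"
    for u :: "int \<Rightarrow> 'a" and \<eta> k
  proof (cases "\<eta> = 0")
    case True
    then have "u (j + 1) = T (u j)" for j using jump[rule_format, of j] by simp
    then have "u k = 0" by (rule no_bounded_orbitsD[OF assms(1) bdd])
    with True show ?thesis by simp
  next
    case False
    moreover have "0 \<le> \<eta>" using norm_ge_zero jump[rule_format, of 0] by (rule order_trans)
    ultimately have "\<eta> > 0" by simp
    then have "norm (u k) < 2 / d * \<eta>"
      using shadowing_bounded_sequence_small[OF assms(1) \<open>d > 0\<close> shadow bdd] jump by blast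
    moreover have "2 / d * \<eta> \<le> max 1 (2 / d) * \<eta>"
      using \<open>\<eta> > 0\<close> by (intro mult_right_mono) auto
    ultimately show ?thesis by simp
  qed
  then show ?thesis unfolding difference_bounded_below_def by (intro exI[of _ "max 1 (2 / d)"]) auto
qed

lemma weighted_orbit_step:
  "\<phi> (k + 1) *\<^sub>R iter_int T (k + 1) x - T (\<phi> k *\<^sub>R iter_int T k x)
     = (\<phi> (k + 1) - \<phi> k) *\<^sub>R iter_int T (k + 1) x"
  by (simp add: linear_scale[OF linear] iter_int_succ scaleR_diff_left)

lemma orbit_segment_bound:
  assumes C: "difference_bounded_below T C" "C \<ge> 1"
    and ends: "norm (iter_int T N x) \<le> 2" "norm (iter_int T (- N) x) \<le> 2"
    and k: "- N \<le> k" "k \<le> N"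
  shows "norm (iter_int T k x) \<le> 2 * C"
proof -
  define \<phi> :: "int \<Rightarrow> real" where "\<phi> j = (if - N \<le> j \<and> j < N then 1 else 0)" for j
  define u where "u j = \<phi> j *\<^sub>R iter_int T j x" for j
  have "finite {j. u j \<noteq> 0}"
    by (rule finite_subset[of _ "{- N..<N}"]) (auto simp: u_def \<phi>_def)
  then have "bounded (range u)" by (rule finite_support_imp_bounded)
  moreover have "norm (u (j + 1) - T (u j)) \<le> 2" for j
  proof -
    have "norm (u (j + 1) - T (u j)) = \<bar>\<phi> (j + 1) - \<phi> j\<bar> * norm (iter_int T (j + 1) x)"
      by (simp add: u_def weighted_orbit_step)
    also have "\<dots> \<le> 2"
    proof (cases "j + 1 = N \<or> j + 1 = - N")
      case True
      then have "norm (iter_int T (j + 1) x) \<le> 2" using ends by auto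
      moreover have "\<bar>\<phi> (j + 1) - \<phi> j\<bar> \<le> 1" by (simp add: \<phi>_def)
      ultimately show ?thesis by (metis mult_mono zero_le_one norm_ge_zero mult_1_left)
    next
      case False
      then have "\<phi> (j + 1) = \<phi> j" by (auto simp: \<phi>_def)
      then show ?thesis by simp
    qed
    finally show ?thesis .
  qed
  ultimately have "norm (u k) \<le> C * 2" by (rule difference_bounded_belowD[OF C(1)])
  then show ?thesis
    using k ends(1) C(2) by (cases "k = N") (auto simp: u_def \<phi>_def)
qed

lemma tent_estimate:
  assumes C: "difference_bounded_below T C"
    and "N > 0" and segment: "\<And>k. - int N \<le> k \<Longrightarrow> k \<le> int N \<Longrightarrow> norm (iter_int T k x) \<le> B"
  shows "norm x \<le> C * (B / N)"
proof -
  define \<phi> :: "int \<Rightarrow> real" where "\<phi> j = max 0 (1 - \<bar>j\<bar> / N)" for j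
  define u where "u j = \<phi> j *\<^sub>R iter_int T j x" for j
  have outside: "\<phi> j = 0" if "\<not> (- int N < j \<and> j < int N)" for j
  proof -
    have "real N \<le> \<bar>real_of_int j\<bar>" using that by linarith
    with \<open>N > 0\<close> show ?thesis by (simp add: \<phi>_def field_simps)
  qed
  have "norm x \<le> B" using segment[of 0] by simp
  then have "0 \<le> B" by (rule order_trans[OF norm_ge_zero])
  have "{j. u j \<noteq> 0} \<subseteq> {- int N..int N}"
  proof
    fix j assume "j \<in> {j. u j \<noteq> 0}"
    then have "\<phi> j \<noteq> 0" by (auto simp: u_def)
    then have "- int N < j \<and> j < int N" using outside by blast
    then show "j \<in> {- int N..int N}" by simp
  qed
  then have "finite {j. u j \<noteq> 0}" by (rule finite_subset) simp
  then have "bounded (range u)" by (rule finite_support_imp_bounded)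
  moreover have "norm (u (j + 1) - T (u j)) \<le> B / N" for j
  proof (cases "- int N \<le> j + 1 \<and> j + 1 \<le> int N")
    case True
    have "\<bar>\<phi> (j + 1) - \<phi> j\<bar> \<le> 1 / N"
      using tent_lipschitz[of N "of_int (j + 1)" "of_int j"] \<open>N > 0\<close> by (simp add: \<phi>_def)
    then have "\<bar>\<phi> (j + 1) - \<phi> j\<bar> * norm (iter_int T (j + 1) x) \<le> 1 / N * B"
      using segment True by (intro mult_mono) auto
    then show ?thesis by (simp add: u_def weighted_orbit_step)
  next
    case False
    then have "\<phi> (j + 1) = 0" "\<phi> j = 0" by (auto intro: outside)
    then show ?thesis using \<open>0 \<le> B\<close> by (simp add: u_def linear_0[OF linear])
  qed
  ultimately have "norm (u 0) \<le> C * (B / N)" by (rule difference_bounded_belowD[OF C])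
  then show ?thesis by (simp add: u_def \<phi>_def)
qed

lemma no_bounded_orbits_shadowing_imp_uniformly_expansive:
  assumes "no_bounded_orbits T" and "shadowing_property T"
  shows "uniformly_expansive T"
proof -
  obtain C where C: "difference_bounded_below T C" "C \<ge> 1"
    using shadowing_difference_bounded_below[OF assms] by blast
  define n :: nat where "n = nat \<lceil>2 * C\<^sup>2\<rceil> + 1"
  have "n > 0" and n: "real n > 2 * C\<^sup>2" unfolding n_def by linarith+
  have "2 \<le> norm (iter_int T (int n) x) \<or> 2 \<le> norm (iter_int T (- int n) x)" if "norm x = 1" for x
  proof (rule ccontr)
    assume "\<not> ?thesis"
    then have "norm (iter_int T (int n) x) \<le> 2" "norm (iter_int T (- int n) x) \<le> 2" by auto
    with C have "norm (iter_int T k x) \<le> 2 * C" if "- int n \<le> k" "k \<le> int n" for k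
      using orbit_segment_bound that by blast
    with C(1) \<open>n > 0\<close> have "norm x \<le> C * (2 * C / n)" by (rule tent_estimate)
    with \<open>norm x = 1\<close> \<open>n > 0\<close> n show False by (simp add: field_simps power2_eq_square)
  qed
  with \<open>n > 0\<close> show ?thesis unfolding uniformly_expansive_def by blast
qed

end

section \<open>Hyperbolicity from shadowing\<close>

text \<open>Multiplication by \<open>z\<close> on the complexification, where \<open>(x, y)\<close> stands for \<open>x + i y\<close>;
  thus \<open>complexified_shift T z\<close> is \<open>T\<^sub>\<complex> - z\<close>.\<close>

definition cscale :: "complex \<Rightarrow> 'a::real_vector \<times> 'a \<Rightarrow> 'a \<times> 'a" where
  "cscale z p = (Re z *\<^sub>R fst p - Im z *\<^sub>R snd p, Im z *\<^sub>R fst p + Re z *\<^sub>R snd p)"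

lemma complexified_shift_eq: "complexified_shift T z p = map_prod T T p - cscale z p"
  by (cases p) (simp add: complexified_shift_def cscale_def)

lemma linear_cscale: "linear (cscale z)"
  by (rule linearI) (simp_all add: cscale_def algebra_simps)

lemma cscale_mult: "cscale (z * w) p = cscale z (cscale w p)"
  by (simp add: cscale_def algebra_simps)

lemma cscale_one [simp]: "cscale 1 p = p"
  by (simp add: cscale_def)

lemma cscale_zero_left [simp]: "cscale 0 p = 0"
  by (simp add: cscale_def zero_prod_def)

lemma cscale_of_real: "cscale (of_real r) p = r *\<^sub>R p"
  by (simp add: cscale_def prod_eq_iff)

lemma cscale_add_left: "cscale (z + w) p = cscale z p + cscale w p"
  by (simp add: cscale_def algebra_simps)

lemma cscale_diff_left: "cscale (z - w) p = cscale z p - cscale w p"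
  by (simp add: cscale_def algebra_simps)

lemma cscale_sum_left: "cscale (\<Sum>j\<in>A. f j) p = (\<Sum>j\<in>A. cscale (f j) p)"
  by (induction A rule: infinite_finite_induct) (simp_all add: cscale_add_left)

lemma norm_cscale_le: "norm (cscale z p) \<le> 4 * cmod z * norm p"
proof -
  have a: "norm (fst p) \<le> norm p" and b: "norm (snd p) \<le> norm p"
    by (rule norm_fst_le_norm norm_snd_le_norm)+
  have re: "\<bar>Re z\<bar> \<le> cmod z" and im: "\<bar>Im z\<bar> \<le> cmod z"
    by (rule abs_Re_le_cmod abs_Im_le_cmod)+
  have "norm (cscale z p) \<le> norm (Re z *\<^sub>R fst p - Im z *\<^sub>R snd p) + norm (Im z *\<^sub>R fst p + Re z *\<^sub>R snd p)"
    unfolding cscale_def by (rule norm_Pair_le)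
  also have "\<dots> \<le> (\<bar>Re z\<bar> * norm (fst p) + \<bar>Im z\<bar> * norm (snd p)) + (\<bar>Im z\<bar> * norm (fst p) + \<bar>Re z\<bar> * norm (snd p))"
    by (intro add_mono order_trans[OF norm_triangle_ineq4] order_trans[OF norm_triangle_ineq]) simp_all
  also have "\<dots> \<le> 4 * (cmod z * norm p)"
    using mult_mono[OF re a] mult_mono[OF im b] mult_mono[OF im a] mult_mono[OF re b] by simp
  finally show ?thesis by simp
qed

lemma norm_cscale_le_mult:
  assumes "cmod z \<le> a" and "norm p \<le> b" and "0 \<le> a"
  shows "norm (cscale z p) \<le> 4 * (a * b)"
proof -
  have "cmod z * norm p \<le> a * b" using mult_mono[OF assms norm_ge_zero] .
  then show ?thesis using norm_cscale_le[of z p] by (simp add: mult.assoc)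
qed

lemma norm_cscale_powi_le: "cmod z = 1 \<Longrightarrow> norm (cscale (z powi k) p) \<le> 4 * norm p"
  using norm_cscale_le[of "z powi k" p] by (simp add: norm_power_int)

context linear_automorphism
begin

lemma linear_map_prod: "linear (map_prod T T)"
  by (rule linearI) (simp_all add: map_prod_def split_beta linear_add[OF linear] linear_scale[OF linear])

lemma map_prod_cscale: "map_prod T T (cscale z p) = cscale z (map_prod T T p)"
  by (simp add: cscale_def linear_diff[OF linear] linear_add[OF linear] linear_scale[OF linear])

lemma linear_complexified_shift: "linear (complexified_shift T z)"
proof -
  have "complexified_shift T z = (\<lambda>p. map_prod T T p - cscale z p)"
    by (simp add: fun_eq_iff complexified_shift_eq)
  then show ?thesis using linear_compose_sub[OF linear_map_prod linear_cscale] by simp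
qed

lemma no_bounded_orbits_map_prod:
  fixes X :: "int \<Rightarrow> 'a \<times> 'a"
  assumes "no_bounded_orbits T" and "bounded (range X)" and "\<And>k. X (k + 1) = map_prod T T (X k)"
  shows "X k = 0"
proof -
  obtain B where B: "\<And>k. norm (X k) \<le> B" using assms(2) by (auto simp: bounded_iff)
  have "bounded (range (fst \<circ> X))" "bounded (range (snd \<circ> X))"
    using order_trans[OF norm_fst_le_norm B] order_trans[OF norm_snd_le_norm B]
    by (auto simp: bounded_iff intro!: exI[of _ B])
  moreover have "(fst \<circ> X) (k + 1) = T ((fst \<circ> X) k)" "(snd \<circ> X) (k + 1) = T ((snd \<circ> X) k)" for k
    using assms(3)[of k] by simp_all
  ultimately have "fst (X k) = 0" "snd (X k) = 0"
    using no_bounded_orbitsD[OF assms(1), of "fst \<circ> X"] no_bounded_orbitsD[OF assms(1), of "snd \<circ> X"]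
    by simp_all
  then show ?thesis by (simp add: prod_eq_iff)
qed

lemma shadowing_bounded_solution_map_prod:
  fixes w :: "int \<Rightarrow> 'a \<times> 'a"
  assumes "shadowing_property T" and "bounded (range w)"
  shows "\<exists>X. bounded (range X) \<and> (\<forall>k. X (k + 1) - map_prod T T (X k) = w k)"
proof -
  obtain W where W: "\<And>k. norm (w k) \<le> W" using assms(2) by (auto simp: bounded_iff)
  have "bounded (range (fst \<circ> w))" "bounded (range (snd \<circ> w))"
    using order_trans[OF norm_fst_le_norm W] order_trans[OF norm_snd_le_norm W]
    by (auto simp: bounded_iff intro!: exI[of _ W])
  then obtain u v where u: "bounded (range u)" "\<And>k. u (k + 1) - T (u k) = fst (w k)"
    and v: "bounded (range v)" "\<And>k. v (k + 1) - T (v k) = snd (w k)"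
    using shadowing_bounded_solution[OF assms(1)] by (metis comp_apply)
  obtain Bu Bv where "\<And>k. norm (u k) \<le> Bu" "\<And>k. norm (v k) \<le> Bv"
    using u(1) v(1) by (auto simp: bounded_iff)
  then have "norm (u k, v k) \<le> Bu + Bv" for k
    by (rule order_trans[OF norm_Pair_le add_mono])
  then have "bounded (range (\<lambda>k. (u k, v k)))" by (auto simp: bounded_iff)
  moreover have "(u (k + 1), v (k + 1)) - map_prod T T (u k, v k) = w k" for k
    using u(2)[of k] v(2)[of k] by (simp add: prod_eq_iff)
  ultimately show ?thesis by blast
qed

lemma cscale_powi_orbit:
  assumes "complexified_shift T z v = 0" and "z \<noteq> 0"
  shows "cscale (z powi (k + 1)) v = map_prod T T (cscale (z powi k) v)"
proof -
  have "map_prod T T v = cscale z v" using assms(1) by (simp add: complexified_shift_eq)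
  then show ?thesis using assms(2) by (simp add: power_int_add_1 cscale_mult map_prod_cscale)
qed

lemma complexified_shift_inj_on_circle:
  assumes "no_bounded_orbits T" and "cmod z = 1" and "complexified_shift T z v = 0"
  shows "v = 0"
proof -
  have "z \<noteq> 0" using assms(2) by auto
  have "bounded (range (\<lambda>k. cscale (z powi k) v))"
    using norm_cscale_powi_le[OF assms(2), of _ v] by (auto simp: bounded_iff intro!: exI[of _ "4 * norm v"])
  from no_bounded_orbits_map_prod[OF assms(1) this cscale_powi_orbit[OF assms(3) \<open>z \<noteq> 0\<close>], of 0]
  show ?thesis by simp
qed

lemma bounded_solution_rotates:
  fixes X :: "int \<Rightarrow> 'a \<times> 'a"
  assumes "no_bounded_orbits T" and "cmod z = 1" and "bounded (range X)"
    and X: "\<And>k. X (k + 1) - map_prod T T (X k) = - cscale (z powi k) f"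
  shows "X (k + 1) = cscale z (X k)"
proof -
  have "z \<noteq> 0" using \<open>cmod z = 1\<close> by auto
  define D where "D j = cscale (inverse z) (X (j + 1)) - X j" for j
  obtain B where B: "\<And>j. norm (X j) \<le> B" using assms(3) by (auto simp: bounded_iff)
  have "norm (D j) \<le> 4 * B + B" for j
    using norm_triangle_ineq4[of "cscale (inverse z) (X (j + 1))" "X j"]
      order_trans[OF norm_cscale_le mult_left_mono[OF B[of "j + 1"]], of "inverse z"] B[of j] \<open>cmod z = 1\<close>
    by (simp add: D_def norm_inverse)
  then have "bounded (range D)" by (auto simp: bounded_iff)
  moreover have "D (j + 1) = map_prod T T (D j)" for j
  proof -
    have "inverse z * z powi (j + 1) = z powi j" using \<open>z \<noteq> 0\<close> by (simp add: power_int_add_1)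
    then have rotated: "cscale (inverse z) (cscale (z powi (j + 1)) f) = cscale (z powi j) f"
      by (simp flip: cscale_mult)
    have "D (j + 1) - map_prod T T (D j)
        = cscale (inverse z) (X (j + 1 + 1) - map_prod T T (X (j + 1))) - (X (j + 1) - map_prod T T (X j))"
      by (simp add: D_def linear_diff[OF linear_map_prod] linear_diff[OF linear_cscale] map_prod_cscale)
    also have "\<dots> = 0" using X[of j] X[of "j + 1"] rotated by (simp add: linear_neg[OF linear_cscale])
    finally show ?thesis by simp
  qed
  ultimately have "D k = 0" by (rule no_bounded_orbits_map_prod[OF assms(1)])
  then have "cscale z (X k) = cscale (z * inverse z) (X (k + 1))" by (simp add: D_def cscale_mult)
  then show ?thesis using \<open>z \<noteq> 0\<close> by simp
qed

lemma complexified_shift_surj_on_circle: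
  assumes "no_bounded_orbits T" and "shadowing_property T"
    and C: "difference_bounded_below (map_prod T T) C" and "cmod z = 1"
  shows "\<exists>v. complexified_shift T z v = f \<and> norm v \<le> C * (4 * norm f)"
proof -
  have bound: "norm (- cscale (z powi k) f) \<le> 4 * norm f" for k
    using norm_cscale_powi_le[OF \<open>cmod z = 1\<close>] by simp
  then have "bounded (range (\<lambda>k. - cscale (z powi k) f))" by (auto simp: bounded_iff)
  then obtain X where X_bdd: "bounded (range X)"
    and X: "\<And>k. X (k + 1) - map_prod T T (X k) = - cscale (z powi k) f"
    using shadowing_bounded_solution_map_prod[OF assms(2)] by blast
  have "cscale z (X 0) - map_prod T T (X 0) = - f"
    using X[of 0] bounded_solution_rotates[OF assms(1,4) X_bdd X, of 0] by simp
  then have "complexified_shift T z (X 0) = f"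
    unfolding complexified_shift_eq by (metis minus_diff_eq minus_minus)
  moreover have "norm (X 0) \<le> C * (4 * norm f)"
    using difference_bounded_belowD[OF C X_bdd] X bound by simp
  ultimately show ?thesis by blast
qed

lemma no_bounded_orbits_shadowing_imp_hyperbolic:
  assumes "no_bounded_orbits T" and "shadowing_property T"
  shows "hyperbolic T"
proof -
  have "\<exists>S. bounded_linear S \<and> S \<circ> complexified_shift T z = id \<and> complexified_shift T z \<circ> S = id"
    if z: "cmod z = 1" for z
  proof -
  let ?A = "complexified_shift T z"
  obtain C where "difference_bounded_below T C"
    using shadowing_difference_bounded_below[OF assms] by blast
  then have C: "difference_bounded_below (map_prod T T) (2 * C)"
    by (rule difference_bounded_below_map_prod)
  have inj: "v = v'" if "?A v = ?A v'" for v v'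
    using complexified_shift_inj_on_circle[OF assms(1) z, of "v - v'"] that
    by (simp add: linear_diff[OF linear_complexified_shift])
  define S where "S f = (SOME v. ?A v = f \<and> norm v \<le> 2 * C * (4 * norm f))" for f
  have S: "?A (S f) = f \<and> norm (S f) \<le> 2 * C * (4 * norm f)" for f
    unfolding S_def by (rule someI_ex[OF complexified_shift_surj_on_circle[OF assms C z]])
  have SA: "S (?A v) = v" for v using inj S by blast
  have "bounded_linear S"
  proof (rule bounded_linear_intro[where K = "8 * C"])
    show "S (f + g) = S f + S g" for f g
      using inj S by (metis linear_add[OF linear_complexified_shift])
    show "S (r *\<^sub>R f) = r *\<^sub>R S f" for r f
      using inj S by (metis linear_scale[OF linear_complexified_shift])
    show "norm (S f) \<le> norm f * (8 * C)" for f
      using S[of f] by (simp add: algebra_simps)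
  qed
  moreover have "S \<circ> ?A = id" "?A \<circ> S = id" using S SA by auto
  ultimately show ?thesis by blast
  qed
  then show ?thesis unfolding hyperbolic_def spectrum_def by blast
qed

end

section \<open>Hyperbolic operators have no bounded orbits\<close>

lemma complexified_shift_change_point:
  "complexified_shift T \<omega> v = complexified_shift T \<zeta> v + cscale (\<zeta> - \<omega>) v"
  by (simp add: complexified_shift_eq cscale_diff_left)

lemma lower_bound_perturb:
  assumes bound: "\<And>v. norm v \<le> K * norm (complexified_shift T \<omega> v)" and "K \<ge> 0"
    and close: "8 * K * cmod (\<zeta> - \<omega>) \<le> 1"
  shows "norm v \<le> 2 * K * norm (complexified_shift T \<zeta> v)"
proof -
  have "norm (complexified_shift T \<omega> v) \<le> norm (complexified_shift T \<zeta> v) + 4 * cmod (\<zeta> - \<omega>) * norm v"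
    unfolding complexified_shift_change_point[of T \<omega> v \<zeta>]
    using norm_triangle_ineq norm_cscale_le order_trans add_left_mono by metis
  then have "norm v \<le> K * norm (complexified_shift T \<zeta> v) + (4 * K * cmod (\<zeta> - \<omega>)) * norm v"
    using bound[of v] mult_left_mono[OF _ \<open>K \<ge> 0\<close>] by (fastforce simp: algebra_simps)
  also have "\<dots> \<le> K * norm (complexified_shift T \<zeta> v) + (1 / 2) * norm v"
    using close by (intro add_left_mono mult_right_mono) simp_all
  finally show ?thesis by simp
qed

lemma lower_bound_off_spectrum:
  assumes "\<omega> \<notin> spectrum T"
  shows "\<exists>K>0. \<forall>v. norm v \<le> K * norm (complexified_shift T \<omega> v)"
proof -
  obtain S where "bounded_linear S" and S: "S \<circ> complexified_shift T \<omega> = id"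
    using assms by (auto simp: spectrum_def)
  then obtain K where "K > 0" and K: "\<And>x. norm (S x) \<le> norm x * K"
    using bounded_linear.pos_bounded by blast
  have "norm v \<le> K * norm (complexified_shift T \<omega> v)" for v
    using K[of "complexified_shift T \<omega> v"] fun_cong[OF S, of v] by (simp add: mult.commute)
  with \<open>K > 0\<close> show ?thesis by blast
qed

lemma hyperbolic_uniform_lower_bound:
  assumes "hyperbolic T"
  shows "\<exists>C>0. \<forall>\<omega> v. cmod \<omega> = 1 \<longrightarrow> norm v \<le> C * norm (complexified_shift T \<omega> v)"
proof -
  have "\<exists>K>0. \<forall>v. norm v \<le> K * norm (complexified_shift T \<omega> v)" if "\<omega> \<in> sphere 0 1" for \<omega>
    using assms that by (intro lower_bound_off_spectrum) (auto simp: hyperbolic_def)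
  then obtain K where K: "\<And>\<omega>. \<omega> \<in> sphere 0 1 \<Longrightarrow> K \<omega> > 0 \<and> (\<forall>v. norm v \<le> K \<omega> * norm (complexified_shift T \<omega> v))"
    by metis
  text \<open>Each bound persists on a ball around its point; compactness of the circle gives a finite subcover.\<close>
  obtain P where P: "P \<subseteq> sphere 0 1" "finite P" "sphere 0 1 \<subseteq> (\<Union>\<omega>\<in>P. ball \<omega> (1 / (8 * K \<omega>)))"
    using compactE_image[OF compact_sphere[of 0 1], of "sphere 0 1" "\<lambda>\<omega>. ball \<omega> (1 / (8 * K \<omega>))"] K
    by (metis (no_types, lifting) UN_I centre_in_ball open_ball subsetI zero_less_divide_1_iff zero_less_mult_iff zero_less_numeral)
  define C where "C = 2 * (\<Sum>\<omega>\<in>P. K \<omega>) + 1"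
  have K_nonneg: "K \<omega> \<ge> 0" if "\<omega> \<in> P" for \<omega> using K[of \<omega>] that P(1) by force
  have "norm v \<le> C * norm (complexified_shift T \<zeta> v)" if "cmod \<zeta> = 1" for \<zeta> v
  proof -
    have "\<zeta> \<in> sphere 0 1" using that by simp
    then obtain \<omega> where "\<omega> \<in> P" and "dist \<omega> \<zeta> < 1 / (8 * K \<omega>)" using P(3) by force
    then have "8 * K \<omega> * cmod (\<zeta> - \<omega>) \<le> 1"
      using K[of \<omega>] P(1) by (auto simp: dist_norm norm_minus_commute field_simps)
    moreover have "K \<omega> > 0" and "\<And>v. norm v \<le> K \<omega> * norm (complexified_shift T \<omega> v)"
      using K[of \<omega>] \<open>\<omega> \<in> P\<close> P(1) by auto
    ultimately have "norm v \<le> 2 * K \<omega> * norm (complexified_shift T \<zeta> v)"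
      using lower_bound_perturb[of "K \<omega>" T \<omega>] by simp
    also have "\<dots> \<le> C * norm (complexified_shift T \<zeta> v)"
      using member_le_sum[of \<omega> P K] \<open>\<omega> \<in> P\<close> K_nonneg P(2) by (intro mult_right_mono) (auto simp: C_def)
    finally show ?thesis .
  qed
  moreover have "C > 0" using K_nonneg by (simp add: C_def sum_nonneg add_nonneg_pos)
  ultimately show ?thesis by blast
qed

text \<open>For an orbit \<open>X\<close> of \<open>T\<^sub>\<complex>\<close>, partial sums of the expansions of \<open>(\<zeta> - T\<^sub>\<complex>)\<inverse> (X 0)\<close>
  that converge for \<open>\<bar>\<zeta>\<bar> > 1\<close> and for \<open>\<bar>\<mu>\<bar> < 1\<close>, respectively.\<close>

definition outer_resolvent_sum :: "(int \<Rightarrow> 'a::real_vector \<times> 'a) \<Rightarrow> complex \<Rightarrow> nat \<Rightarrow> 'a \<times> 'a" where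
  "outer_resolvent_sum X \<zeta> N = (\<Sum>n<N. cscale (inverse \<zeta> ^ Suc n) (X (int n)))"

definition inner_resolvent_sum :: "(int \<Rightarrow> 'a::real_vector \<times> 'a) \<Rightarrow> complex \<Rightarrow> nat \<Rightarrow> 'a \<times> 'a" where
  "inner_resolvent_sum X \<mu> N = - (\<Sum>n<N. cscale (\<mu> ^ n) (X (- int n - 1)))"

lemma cscale_outer_resolvent_sum:
  assumes "\<zeta> \<noteq> 0"
  shows "cscale \<zeta> (outer_resolvent_sum X \<zeta> N) = (\<Sum>n<N. cscale (inverse \<zeta> ^ n) (X (int n)))"
  using assms by (simp add: outer_resolvent_sum_def linear_sum[OF linear_cscale] flip: cscale_mult mult.assoc)

lemma cscale_inner_resolvent_sum:
  "cscale \<mu> (inner_resolvent_sum X \<mu> N) = - (\<Sum>n<N. cscale (\<mu> ^ Suc n) (X (- int n - 1)))"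
  by (simp add: inner_resolvent_sum_def linear_sum[OF linear_cscale] linear_neg[OF linear_cscale]
      flip: cscale_mult)

lemma sum_powers_root_of_unity:
  fixes z :: complex
  assumes "N > 0" and "z ^ N = 1"
  shows "(\<Sum>j<N. z ^ j) = (if z = 1 then of_nat N else 0)"
  using assms by (simp add: sum_gp_strict)

lemma sum_powers_primitive_root:
  assumes "N > 0"
  defines "w \<equiv> exp (2 * of_real pi * \<i> / of_nat N)"
  shows "(\<Sum>j<N. (w ^ j) ^ m) = (if N dvd m then of_nat N else 0)"
    and "(\<Sum>j<N. (inverse w ^ j) ^ m) = (if N dvd m then of_nat N else 0)"
proof -
  have w_pow: "w ^ m = exp (2 * of_real pi * \<i> * of_nat m / of_nat N)" for m
    unfolding w_def exp_of_nat_mult[symmetric] by (simp add: mult_ac)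
  have "w ^ m = 1 \<longleftrightarrow> N dvd m"
    unfolding w_pow using complex_root_unity_eq_1[of N m] \<open>N > 0\<close> by simp
  moreover have "(w ^ m) ^ N = 1"
    using \<open>N > 0\<close> by (simp add: w_pow exp_of_nat_mult[symmetric] exp_eq_1 flip: power_mult)
      (metis of_int_of_nat_eq)
  moreover have "(w ^ j) ^ m = (w ^ m) ^ j" "(inverse w ^ j) ^ m = inverse (w ^ m) ^ j" for j
    by (simp_all add: power_inverse flip: power_mult) (simp_all add: mult.commute)
  ultimately show "(\<Sum>j<N. (w ^ j) ^ m) = (if N dvd m then of_nat N else 0)"
    and "(\<Sum>j<N. (inverse w ^ j) ^ m) = (if N dvd m then of_nat N else 0)"
    using sum_powers_root_of_unity[OF \<open>N > 0\<close>, of "w ^ m"] sum_powers_root_of_unity[OF \<open>N > 0\<close>, of "inverse (w ^ m)"]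
    by (simp_all add: power_inverse)
qed

lemma average_outer_resolvent_sums:
  assumes "N > 0" and "\<rho> > 0"
  defines "w \<equiv> exp (2 * of_real pi * \<i> / of_nat N)"
  shows "(\<Sum>j<N. cscale (of_real \<rho> * w ^ j) (outer_resolvent_sum X (of_real \<rho> * w ^ j) N)) = real N *\<^sub>R X 0"
proof -
  have "of_real \<rho> * w ^ j \<noteq> 0" for j using \<open>\<rho> > 0\<close> by (simp add: w_def)
  moreover have "inverse (of_real \<rho> * w ^ j) ^ n = of_real (inverse \<rho> ^ n) * (inverse w ^ j) ^ n" for j n
    by (simp add: power_mult_distrib power_inverse)
  ultimately have "(\<Sum>j<N. cscale (of_real \<rho> * w ^ j) (outer_resolvent_sum X (of_real \<rho> * w ^ j) N))
      = (\<Sum>j<N. \<Sum>n<N. cscale (of_real (inverse \<rho> ^ n) * (inverse w ^ j) ^ n) (X (int n)))"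
    by (simp add: cscale_outer_resolvent_sum)
  also have "\<dots> = (\<Sum>n<N. \<Sum>j<N. cscale (of_real (inverse \<rho> ^ n) * (inverse w ^ j) ^ n) (X (int n)))"
    by (rule sum.swap)
  also have "\<dots> = (\<Sum>n<N. cscale (of_real (inverse \<rho> ^ n) * (\<Sum>j<N. (inverse w ^ j) ^ n)) (X (int n)))"
    by (simp add: cscale_sum_left sum_distrib_left)
  also have "\<dots> = (\<Sum>n<N. if n = 0 then cscale (of_nat N) (X 0) else 0)"
  proof (rule sum.cong)
    fix n assume "n \<in> {..<N}"
    then have "N dvd n \<longleftrightarrow> n = 0" using \<open>N > 0\<close> by (auto dest: dvd_imp_le)
    then show "cscale (of_real (inverse \<rho> ^ n) * (\<Sum>j<N. (inverse w ^ j) ^ n)) (X (int n))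
        = (if n = 0 then cscale (of_nat N) (X 0) else 0)"
      using sum_powers_primitive_root(2)[OF \<open>N > 0\<close>, of n] by (simp add: w_def)
  qed simp
  also have "\<dots> = real N *\<^sub>R X 0"
    using \<open>N > 0\<close> cscale_of_real[of "real N" "X 0"] by simp
  finally show ?thesis .
qed

lemma average_inner_resolvent_sums:
  assumes "N > 0" and "\<rho> > 0"
  defines "w \<equiv> exp (2 * of_real pi * \<i> / of_nat N)"
  shows "(\<Sum>j<N. cscale (of_real \<rho> * w ^ j) (inner_resolvent_sum X (of_real \<rho> * w ^ j) N))
    = - (real N * \<rho> ^ N) *\<^sub>R X (- int N)"
proof -
  have coeff: "(of_real \<rho> * w ^ j) ^ Suc n = of_real (\<rho> ^ Suc n) * (w ^ j) ^ Suc n" for j n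
    by (simp only: power_mult_distrib of_real_power)
  have "(\<Sum>j<N. cscale (of_real \<rho> * w ^ j) (inner_resolvent_sum X (of_real \<rho> * w ^ j) N))
      = - (\<Sum>j<N. \<Sum>n<N. cscale (of_real (\<rho> ^ Suc n) * (w ^ j) ^ Suc n) (X (- int n - 1)))"
    unfolding cscale_inner_resolvent_sum coeff by (simp only: sum_negf)
  also have "\<dots> = - (\<Sum>n<N. \<Sum>j<N. cscale (of_real (\<rho> ^ Suc n) * (w ^ j) ^ Suc n) (X (- int n - 1)))"
    by (subst sum.swap) (rule refl)
  also have "\<dots> = - (\<Sum>n<N. cscale (of_real (\<rho> ^ Suc n) * (\<Sum>j<N. (w ^ j) ^ Suc n)) (X (- int n - 1)))"
    by (simp add: cscale_sum_left sum_distrib_left)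
  also have "\<dots> = - (\<Sum>n<N. if Suc n = N then cscale (of_real (real N * \<rho> ^ N)) (X (- int N)) else 0)"
  proof (intro arg_cong[where f = uminus] sum.cong refl)
    fix n assume "n \<in> {..<N}"
    then have "N dvd Suc n \<longleftrightarrow> Suc n = N" by (auto dest: dvd_imp_le)
    then show "cscale (of_real (\<rho> ^ Suc n) * (\<Sum>j<N. (w ^ j) ^ Suc n)) (X (- int n - 1))
        = (if Suc n = N then cscale (of_real (real N * \<rho> ^ N)) (X (- int N)) else 0)"
      using sum_powers_primitive_root(1)[OF \<open>N > 0\<close>, of "Suc n"]
      by (auto simp: w_def mult.commute minus_diff_commute)
  qed
  also have "\<dots> = - (real N * \<rho> ^ N) *\<^sub>R X (- int N)"
  proof -
    have "Suc n = N \<longleftrightarrow> n = N - 1" for n using \<open>N > 0\<close> by auto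
    then show ?thesis using \<open>N > 0\<close> cscale_of_real[of "real N * \<rho> ^ N" "X (- int N)"] by simp
  qed
  finally show ?thesis .
qed

lemma le_of_le_add_power:
  fixes a b c r :: real
  assumes "0 \<le> r" "r < 1" and le: "\<And>N. N > 0 \<Longrightarrow> a \<le> b + c * r ^ N"
  shows "a \<le> b"
proof (rule LIMSEQ_le_const)
  show "(\<lambda>N. b + c * r ^ N) \<longlonglongrightarrow> b"
    using LIMSEQ_power_zero[of r] assms(1,2) tendsto_add[OF tendsto_const tendsto_mult[OF tendsto_const]]
    by fastforce
  show "\<exists>N. \<forall>n\<ge>N. a \<le> b + c * r ^ n" using le by (intro exI[of _ 1]) auto
qed

lemma nonpos_of_le_mult_small:
  fixes a K h\<^sub>0 :: real
  assumes "h\<^sub>0 > 0" and le: "\<And>h. 0 < h \<Longrightarrow> h \<le> h\<^sub>0 \<Longrightarrow> a \<le> K * h"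
  shows "a \<le> 0"
proof (rule field_le_epsilon)
  fix \<epsilon> :: real assume "\<epsilon> > 0"
  define h where "h = min h\<^sub>0 (\<epsilon> / (\<bar>K\<bar> + 1))"
  have "0 < h" "h \<le> h\<^sub>0" using \<open>h\<^sub>0 > 0\<close> \<open>\<epsilon> > 0\<close> by (auto simp: h_def)
  have "K * h \<le> \<bar>K\<bar> * (\<epsilon> / (\<bar>K\<bar> + 1))"
    using \<open>0 < h\<close> by (intro order_trans[OF abs_ge_self[of "K * h", unfolded abs_mult]] mult_left_mono)
      (auto simp: h_def)
  also have "\<dots> \<le> \<epsilon>" using \<open>\<epsilon> > 0\<close> by (simp add: field_simps)
  finally show "a \<le> 0 + \<epsilon>" using le[OF \<open>0 < h\<close> \<open>h \<le> h\<^sub>0\<close>] by simp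
qed

context linear_automorphism
begin

lemma resolvent_sums_close:
  assumes C: "\<And>v. norm v \<le> C * norm (complexified_shift T \<omega> v)" "C > 0"
    and h: "cmod (\<zeta> - \<omega>) \<le> h" "cmod (\<mu> - \<omega>) \<le> h" "8 * C * h \<le> 1" and "cmod \<zeta> \<le> 2"
    and F: "complexified_shift T \<zeta> F = E\<^sub>1 - y" and G: "complexified_shift T \<mu> G = E\<^sub>2 - y"
    and E: "norm E\<^sub>1 \<le> e" "norm E\<^sub>2 \<le> e"
  shows "norm (cscale \<zeta> F - cscale \<mu> G) \<le> 16 * C * e + (64 * C + 8) * h * (2 * C * (norm y + e))"
proof -
  define B where "B = 2 * C * (norm y + e)"
  have "0 \<le> h" using h(1) norm_ge_zero order_trans by blast
  have perturbed: "norm v \<le> 2 * C * norm (complexified_shift T \<xi> v)" if "cmod (\<xi> - \<omega>) \<le> h" for \<xi> v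
    using lower_bound_perturb[OF C(1)] C(2) order_trans[OF mult_left_mono[OF that] h(3)] by simp
  have "norm F \<le> B" and "norm G \<le> B"
    using perturbed[OF h(1), of F] perturbed[OF h(2), of G] F G E C(2)
      norm_triangle_ineq4[of E\<^sub>1 y] norm_triangle_ineq4[of E\<^sub>2 y]
    by (auto simp: B_def intro: order_trans mult_left_mono)
  have shift_error: "norm (cscale (\<zeta> - \<omega>) F - cscale (\<mu> - \<omega>) G) \<le> 8 * h * B"
    using norm_cscale_le_mult[OF h(1) \<open>norm F \<le> B\<close> \<open>0 \<le> h\<close>] norm_cscale_le_mult[OF h(2) \<open>norm G \<le> B\<close> \<open>0 \<le> h\<close>]
      norm_triangle_ineq4[of "cscale (\<zeta> - \<omega>) F" "cscale (\<mu> - \<omega>) G"]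
    by linarith
  have shift_diff: "complexified_shift T \<omega> (F - G) = (E\<^sub>1 - E\<^sub>2) + (cscale (\<zeta> - \<omega>) F - cscale (\<mu> - \<omega>) G)"
  proof -
    have AF: "complexified_shift T \<omega> F = E\<^sub>1 - y + cscale (\<zeta> - \<omega>) F"
      unfolding complexified_shift_change_point[of T \<omega> F \<zeta>] F ..
    have AG: "complexified_shift T \<omega> G = E\<^sub>2 - y + cscale (\<mu> - \<omega>) G"
      unfolding complexified_shift_change_point[of T \<omega> G \<mu>] G ..
    show ?thesis unfolding linear_diff[OF linear_complexified_shift] AF AG by (simp add: algebra_simps)
  qed
  have "norm (complexified_shift T \<omega> (F - G)) \<le> 2 * e + 8 * h * B"
    unfolding shift_diff
    using norm_triangle_ineq[of "E\<^sub>1 - E\<^sub>2" "cscale (\<zeta> - \<omega>) F - cscale (\<mu> - \<omega>) G"]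
      norm_triangle_ineq4[of E\<^sub>1 E\<^sub>2] E shift_error by linarith
  then have "norm (F - G) \<le> C * (2 * e + 8 * h * B)"
    using C(1)[of "F - G"] C(2) by (meson mult_left_mono less_imp_le order_trans)
  then have "norm (cscale \<zeta> (F - G)) \<le> 4 * (2 * (C * (2 * e + 8 * h * B)))"
    by (rule norm_cscale_le_mult[OF \<open>cmod \<zeta> \<le> 2\<close>]) simp
  moreover have "norm (cscale (\<zeta> - \<mu>) G) \<le> 4 * (2 * h * B)"
    using norm_triangle_ineq4[of "\<zeta> - \<omega>" "\<mu> - \<omega>"] h(1,2) \<open>0 \<le> h\<close>
    by (intro norm_cscale_le_mult \<open>norm G \<le> B\<close>) simp_all
  moreover have split: "cscale \<zeta> F - cscale \<mu> G = cscale \<zeta> (F - G) + cscale (\<zeta> - \<mu>) G"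
    by (simp add: linear_diff[OF linear_cscale] cscale_diff_left)
  ultimately have "norm (cscale \<zeta> F - cscale \<mu> G) \<le> 4 * (2 * (C * (2 * e + 8 * h * B))) + 4 * (2 * h * B)"
    unfolding split using norm_triangle_ineq[of "cscale \<zeta> (F - G)" "cscale (\<zeta> - \<mu>) G"] by linarith
  then show ?thesis by (simp add: B_def algebra_simps)
qed

lemma complexified_shift_cscale:
  "complexified_shift T \<zeta> (cscale c p) = cscale c (complexified_shift T \<zeta> p)"
  unfolding complexified_shift_eq map_prod_cscale linear_diff[OF linear_cscale] cscale_mult[symmetric]
  by (simp add: mult.commute)

lemma complexified_shift_orbit_term:
  assumes orbit: "\<And>k. X (k + 1) = map_prod T T (X k)"
  shows "complexified_shift T \<zeta> (cscale c (X k)) = cscale c (X (k + 1)) - cscale (c * \<zeta>) (X k)"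
proof -
  have "complexified_shift T \<zeta> (cscale c (X k)) = cscale c (map_prod T T (X k) - cscale \<zeta> (X k))"
    by (subst complexified_shift_cscale) (simp add: complexified_shift_eq)
  then show ?thesis by (simp add: orbit linear_diff[OF linear_cscale] cscale_mult)
qed

lemma complexified_shift_outer_resolvent_sum:
  assumes orbit: "\<And>k. X (k + 1) = map_prod T T (X k)" and "\<zeta> \<noteq> 0"
  shows "complexified_shift T \<zeta> (outer_resolvent_sum X \<zeta> N) = cscale (inverse \<zeta> ^ N) (X (int N)) - X 0"
proof (induction N)
  case 0
  then show ?case by (simp add: outer_resolvent_sum_def linear_0[OF linear_complexified_shift])
next
  case (Suc N)
  have cancel: "inverse \<zeta> * inverse \<zeta> ^ N * \<zeta> = inverse \<zeta> ^ N" using \<open>\<zeta> \<noteq> 0\<close> by simp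
  show ?case
    using Suc complexified_shift_orbit_term[of X, OF orbit, of \<zeta> "inverse \<zeta> ^ Suc N" "int N"]
    by (simp add: outer_resolvent_sum_def linear_add[OF linear_complexified_shift] add.commute cancel)
qed

lemma complexified_shift_inner_resolvent_sum:
  assumes orbit: "\<And>k. X (k + 1) = map_prod T T (X k)"
  shows "complexified_shift T \<mu> (inner_resolvent_sum X \<mu> N) = cscale (\<mu> ^ N) (X (- int N)) - X 0"
proof (induction N)
  case 0
  then show ?case by (simp add: inner_resolvent_sum_def linear_0[OF linear_complexified_shift])
next
  case (Suc N)
  have "inner_resolvent_sum X \<mu> (Suc N) = inner_resolvent_sum X \<mu> N - cscale (\<mu> ^ N) (X (- int N - 1))"
    by (simp add: inner_resolvent_sum_def)
  then show ?case
    using Suc complexified_shift_orbit_term[of X, OF orbit, of \<mu> "\<mu> ^ N" "- int N - 1"]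
    by (simp add: linear_diff[OF linear_complexified_shift] mult.commute minus_diff_commute)
qed

lemma resolvent_sums_close_at_circle:
  fixes X :: "int \<Rightarrow> 'a \<times> 'a"
  assumes C: "C > 0" "\<And>v. norm v \<le> C * norm (complexified_shift T \<omega> v)" and "cmod \<omega> = 1"
    and orbit: "\<And>k. X (k + 1) = map_prod T T (X k)" and M: "\<And>k. norm (X k) \<le> M"
    and h: "0 < h" "h \<le> 1" "8 * C * h \<le> 1"
  defines "\<zeta> \<equiv> of_real (1 + h) * \<omega>" and "\<mu> \<equiv> of_real (inverse (1 + h)) * \<omega>"
  shows "norm (cscale \<zeta> (outer_resolvent_sum X \<zeta> N) - cscale \<mu> (inner_resolvent_sum X \<mu> N))
    \<le> 64 * C * M * inverse (1 + h) ^ N + (64 * C + 8) * h * (2 * C * (norm (X 0) + 4 * M))"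
proof -
  define r where "r = inverse (1 + h)"
  have "0 < r" "r \<le> 1" "1 - r \<le> h" using h by (auto simp: r_def field_simps)
  have "0 \<le> M" using M[of 0] norm_ge_zero order_trans by blast
  have tail_bound: "norm (cscale c (X k)) \<le> 4 * r ^ N * M" if "cmod c = r ^ N" for c k
    using norm_cscale_le_mult[OF _ M[of k], of c "r ^ N"] that \<open>0 < r\<close> by simp
  have "\<zeta> - \<omega> = of_real h * \<omega>" "\<mu> - \<omega> = of_real (r - 1) * \<omega>"
    by (simp_all add: \<zeta>_def \<mu>_def r_def algebra_simps)
  then have "cmod (\<zeta> - \<omega>) = \<bar>h\<bar> * cmod \<omega>" "cmod (\<mu> - \<omega>) = \<bar>r - 1\<bar> * cmod \<omega>"
    "cmod \<zeta> = \<bar>1 + h\<bar> * cmod \<omega>"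
    by (simp_all only: \<zeta>_def norm_mult norm_of_real)
  then have dist_\<zeta>: "cmod (\<zeta> - \<omega>) \<le> h" and dist_\<mu>: "cmod (\<mu> - \<omega>) \<le> h" and norm_\<zeta>: "cmod \<zeta> = 1 + h"
    using \<open>cmod \<omega> = 1\<close> h \<open>r \<le> 1\<close> \<open>1 - r \<le> h\<close> by simp_all
  have "cmod (inverse \<zeta> ^ N) = r ^ N"
    unfolding norm_power norm_inverse norm_\<zeta> r_def ..
  then have tail_outer: "norm (cscale (inverse \<zeta> ^ N) (X (int N))) \<le> 4 * r ^ N * M"
    by (rule tail_bound)
  have "cmod \<mu> = r"
    using \<open>0 < r\<close> unfolding \<mu>_def norm_mult norm_of_real \<open>cmod \<omega> = 1\<close> r_def by simp
  then have "cmod (\<mu> ^ N) = r ^ N" by (simp add: norm_power)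
  then have tail_inner: "norm (cscale (\<mu> ^ N) (X (- int N))) \<le> 4 * r ^ N * M"
    by (rule tail_bound)
  have "\<zeta> \<noteq> 0" using norm_\<zeta> h by auto
  have "norm (cscale \<zeta> (outer_resolvent_sum X \<zeta> N) - cscale \<mu> (inner_resolvent_sum X \<mu> N))
      \<le> 16 * C * (4 * r ^ N * M) + (64 * C + 8) * h * (2 * C * (norm (X 0) + 4 * r ^ N * M))"
    by (rule resolvent_sums_close[OF C(2) C(1) dist_\<zeta> dist_\<mu> h(3) _
          complexified_shift_outer_resolvent_sum[of X, OF orbit \<open>\<zeta> \<noteq> 0\<close>]
          complexified_shift_inner_resolvent_sum[of X, OF orbit] tail_outer tail_inner])
      (use norm_\<zeta> h in simp)
  also have "\<dots> \<le> 64 * C * M * r ^ N + (64 * C + 8) * h * (2 * C * (norm (X 0) + 4 * M))"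
    using C(1) h \<open>0 \<le> M\<close> \<open>0 < r\<close> \<open>r \<le> 1\<close>
    by (intro add_mono mult_left_mono) (auto simp: power_le_one mult_left_le_one_le)
  finally show ?thesis by (simp add: r_def)
qed

text \<open>Averaging over the \<open>N\<close>-th roots of unity kills all terms of the resolvent sums except \<open>X 0\<close>
  and one term of size \<open>(1 + h)\<^sup>-\<^sup>N\<close>.\<close>

lemma orbit_estimate_near_circle:
  fixes X :: "int \<Rightarrow> 'a \<times> 'a"
  assumes C: "C > 0" "\<And>\<omega> v. cmod \<omega> = 1 \<Longrightarrow> norm v \<le> C * norm (complexified_shift T \<omega> v)"
    and orbit: "\<And>k. X (k + 1) = map_prod T T (X k)" and M: "\<And>k. norm (X k) \<le> M"
    and h: "0 < h" "h \<le> 1" "8 * C * h \<le> 1" and "N > 0"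
  shows "norm (X 0) \<le> (64 * C + 8) * h * (2 * C * (norm (X 0) + 4 * M)) + (64 * C * M + M) * inverse (1 + h) ^ N"
proof -
  define r where "r = inverse (1 + h)"
  have "0 < r" using h by (simp add: r_def)
  define w where "w = exp (2 * of_real pi * \<i> / of_nat N)"
  define D where "D j = cscale (of_real (1 + h) * w ^ j) (outer_resolvent_sum X (of_real (1 + h) * w ^ j) N)
      - cscale (of_real r * w ^ j) (inner_resolvent_sum X (of_real r * w ^ j) N)" for j
  define bound where "bound = 64 * C * M * r ^ N + (64 * C + 8) * h * (2 * C * (norm (X 0) + 4 * M))"
  have "norm (D j) \<le> bound" for j
  proof -
    have "cmod (w ^ j) = 1" by (simp add: w_def norm_power)
    from resolvent_sums_close_at_circle[where X = X, OF C(1) C(2)[OF this] this orbit M h]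
    show ?thesis by (simp add: D_def bound_def r_def)
  qed
  moreover have "(\<Sum>j<N. D j) = real N *\<^sub>R (X 0 + r ^ N *\<^sub>R X (- int N))"
    using average_outer_resolvent_sums[OF \<open>N > 0\<close>, of "1 + h" X] average_inner_resolvent_sums[OF \<open>N > 0\<close> \<open>0 < r\<close>, of X] h
    by (simp add: D_def w_def sum_subtractf scaleR_add_right)
  ultimately have "real N * norm (X 0 + r ^ N *\<^sub>R X (- int N)) \<le> real N * bound"
    using norm_sum[of D "{..<N}"] sum_bounded_above[of "{..<N}" "\<lambda>j. norm (D j)" bound] by simp
  then have "norm (X 0 + r ^ N *\<^sub>R X (- int N)) \<le> bound" using \<open>N > 0\<close> by simp
  moreover have "norm (r ^ N *\<^sub>R X (- int N)) \<le> M * r ^ N" using M[of "- int N"] \<open>0 < r\<close> by (simp add: mult.commute)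
  ultimately show ?thesis
    using norm_triangle_ineq4[of "X 0 + r ^ N *\<^sub>R X (- int N)" "r ^ N *\<^sub>R X (- int N)"]
    by (simp add: bound_def r_def algebra_simps)
qed

lemma hyperbolic_imp_no_bounded_orbits:
  assumes "hyperbolic T"
  shows "no_bounded_orbits T"
  unfolding no_bounded_orbits_def
proof (intro allI impI)
  fix x assume "bounded (range (\<lambda>n. iter_int T n x))"
  then obtain M where M: "\<And>n. norm (iter_int T n x) \<le> M" by (auto simp: bounded_iff)
  obtain C where C: "C > 0" "\<And>\<omega> v. cmod \<omega> = 1 \<Longrightarrow> norm v \<le> C * norm (complexified_shift T \<omega> v)"
    using hyperbolic_uniform_lower_bound[OF assms] by blast
  define X :: "int \<Rightarrow> 'a \<times> 'a" where "X n = (iter_int T n x, 0)" for n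
  have orbit: "X (k + 1) = map_prod T T (X k)" for k
    by (simp add: X_def iter_int_succ linear_0[OF linear])
  have "norm (X k) \<le> M" for k using M[of k] by (simp add: X_def)
  note estimate = orbit_estimate_near_circle[of C X, OF C orbit this]
  define K where "K = (64 * C + 8) * (2 * C * (norm x + 4 * M))"
  have small: "norm x \<le> K * h" if "0 < h" "h \<le> min 1 (1 / (8 * C))" for h
  proof (rule le_of_le_add_power)
    show "0 \<le> inverse (1 + h)" "inverse (1 + h) < 1" using \<open>0 < h\<close> by (auto simp: inverse_less_1_iff)
    show "norm x \<le> K * h + (64 * C * M + M) * inverse (1 + h) ^ N" if "N > 0" for N
      using estimate[of h N] \<open>0 < h\<close> \<open>h \<le> min 1 (1 / (8 * C))\<close> \<open>N > 0\<close> C(1)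
      by (simp add: X_def K_def field_simps)
  qed
  have "0 < min 1 (1 / (8 * C))" using C(1) by simp
  then have "norm x \<le> 0" using small by (rule nonpos_of_le_mult_small)
  then show "x = 0" by simp
qed

end

theorem mainTheorem15:
  fixes T :: "'a::banach \<Rightarrow> 'a"
  assumes "T \<in> L_aut"
    and "shadowing_property T"
  shows "(uniformly_expansive T \<longleftrightarrow> expansive T)
       \<and> (expansive T \<longleftrightarrow> unique_shadowing_property T)
       \<and> (unique_shadowing_property T \<longleftrightarrow> hyperbolic T)"
proof -
  interpret linear_automorphism T
    using assms(1) by (intro linear_automorphism.intro) (auto simp: L_aut_def bounded_linear.linear)
  have "expansive T \<longleftrightarrow> no_bounded_orbits T" by (rule expansive_iff_no_bounded_orbits)
  moreover have "uniformly_expansive T \<longleftrightarrow> no_bounded_orbits T"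
    using uniformly_expansive_imp_no_bounded_orbits
      no_bounded_orbits_shadowing_imp_uniformly_expansive[OF _ assms(2)] by blast
  moreover have "unique_shadowing_property T \<longleftrightarrow> expansive T"
    using unique_shadowing_imp_expansive expansive_shadowing_imp_unique_shadowing[OF _ assms(2)] by blast
  moreover have "hyperbolic T \<longleftrightarrow> no_bounded_orbits T"
    using hyperbolic_imp_no_bounded_orbits no_bounded_orbits_shadowing_imp_hyperbolic[OF _ assms(2)] by blast
  ultimately show ?thesis by blast
qed

end
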